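(* Let ${\bf B}$ and ${\bf C}$ be $n\times n$ matrices with non-negative entries, and let ${\bf A}$ be an $n\times n$ complex matrix satisfying $|[{\bf A}]_{i,j}|\le\sqrt{[{\bf B}]_{i,j}}\sqrt{[{\bf C}]_{i,j}}$ for all $i,j$. Then $\rho({\bf A})\le\sqrt{\rho({\bf B})}\sqrt{\rho({\bf C})}$. If furthermore $\max(\rho({\bf B}),\rho({\bf C}))<1$, then $\rho({\bf A})<1$ and $$\|({\bf I}_n-{\bf A})^{-1}\|_\infty\le\sqrt{\|({\bf I}_n-{\bf B})^{-1}\|_\infty}\sqrt{\|({\bf I}_n-{\bf C})^{-1}\|_\infty}.$$
   Context: $\rho(\cdot)$ denotes the spectral radius and $\|{\bf M}\|_\infty=\max_i\sum_j|M_{ij}|$. *)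

theory Defs
  imports "Jordan_Normal_Form.Spectral_Radius"
begin

definition inf_norm :: "'a :: real_normed_vector mat \<Rightarrow> real" where
  "inf_norm M = Max {(\<Sum>j<dim_col M. norm (M $$ (i, j))) | i. i < dim_row M}"

text \<open>The (two-sided) inverse of a square matrix (unspecified if it does not exist).\<close>
definition inv_mat :: "'a :: field mat \<Rightarrow> 'a mat" where
  "inv_mat M = (THE X. X \<in> carrier_mat (dim_row M) (dim_row M) \<and>
                       M * X = 1\<^sub>m (dim_row M) \<and> X * M = 1\<^sub>m (dim_row M))"

end

theory Submission
  imports Defs "HOL-Analysis.Convex"
begin

text \<open>
  Entrywise domination |A i j| \<le> sqrt (B i j) * sqrt (C i j) is preserved by matrix products,
  hence by powers, because Cauchy-Schwarz gives \<Sum>l. sqrt (b l * c l) \<le> sqrt (\<Sum>l. b l) * sqrt (\<Sum>l. c l);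
  for the same reason it passes to limits of partial sums, in particular to the Neumann series
  (I - A)\<inverse> = \<Sum>k. A^k. If \<rho>(B) < rB and \<rho>(C) < rC, the entries of B^k and C^k are O(rB^k) and
  O(rC^k), so those of A^k are O((sqrt rB * sqrt rC)^k), and an eigenvector of A shows
  \<rho>(A) \<le> sqrt rB * sqrt rC; letting rB and rC tend to \<rho>(B) and \<rho>(C) gives the spectral radius bound.
  The norm bound is Cauchy-Schwarz once more, on the row sums of the dominated inverses.
\<close>

lemma norm_sum_le_sqrt_sum_mult_sqrt_sum:
  fixes a :: "'i \<Rightarrow> 'a::real_normed_vector" and b c :: "'i \<Rightarrow> real"
  assumes "\<And>k. k \<in> K \<Longrightarrow> 0 \<le> b k" "\<And>k. k \<in> K \<Longrightarrow> 0 \<le> c k"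
    and "\<And>k. k \<in> K \<Longrightarrow> norm (a k) \<le> sqrt (b k) * sqrt (c k)"
  shows "norm (\<Sum>k\<in>K. a k) \<le> sqrt (\<Sum>k\<in>K. b k) * sqrt (\<Sum>k\<in>K. c k)"
proof -
  have "(\<Sum>k\<in>K. sqrt (b k) * sqrt (c k))\<^sup>2 \<le> (\<Sum>k\<in>K. (sqrt (b k))\<^sup>2) * (\<Sum>k\<in>K. (sqrt (c k))\<^sup>2)"
    by (rule Cauchy_Schwarz_ineq_sum)
  also have "\<dots> = (\<Sum>k\<in>K. b k) * (\<Sum>k\<in>K. c k)"
    using assms(1,2) by (simp cong: sum.cong)
  finally have cs: "(\<Sum>k\<in>K. sqrt (b k) * sqrt (c k)) \<le> sqrt (\<Sum>k\<in>K. b k) * sqrt (\<Sum>k\<in>K. c k)"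
    by (simp add: real_le_rsqrt flip: real_sqrt_mult)
  have "norm (\<Sum>k\<in>K. a k) \<le> (\<Sum>k\<in>K. sqrt (b k) * sqrt (c k))"
    using assms(3) by (rule order.trans[OF norm_sum sum_mono])
  with cs show ?thesis by linarith
qed

lemma index_mult_mat_square:
  fixes P Q :: "'a::semiring_0 mat"
  assumes "P \<in> carrier_mat n n" "Q \<in> carrier_mat n n" "i < n" "j < n"
  shows "(P * Q) $$ (i, j) = (\<Sum>l<n. P $$ (i, l) * Q $$ (l, j))"
  using assms by (simp add: scalar_prod_def lessThan_atLeast0 row_def col_def)

lemma row_sum_le_inf_norm:
  fixes X :: "'a::real_normed_vector mat"
  assumes "X \<in> carrier_mat n n" "i < n"
  shows "(\<Sum>j<n. norm (X $$ (i, j))) \<le> inf_norm X"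
  unfolding inf_norm_def using assms by (intro Max_ge) auto

definition geomean_dominated :: "nat \<Rightarrow> 'a::real_normed_vector mat \<Rightarrow> real mat \<Rightarrow> real mat \<Rightarrow> bool"
  where "geomean_dominated n A B C \<longleftrightarrow> (\<forall>i<n. \<forall>j<n. 0 \<le> B $$ (i, j) \<and> 0 \<le> C $$ (i, j) \<and>
           norm (A $$ (i, j)) \<le> sqrt (B $$ (i, j)) * sqrt (C $$ (i, j)))"

lemma geomean_dominatedD:
  assumes "geomean_dominated n A B C" "i < n" "j < n"
  shows "0 \<le> B $$ (i, j)" "0 \<le> C $$ (i, j)"
    and "norm (A $$ (i, j)) \<le> sqrt (B $$ (i, j)) * sqrt (C $$ (i, j))"
  using assms unfolding geomean_dominated_def by auto

lemma geomean_dominated_one: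
  "geomean_dominated n (1\<^sub>m n :: 'a::real_normed_algebra_1 mat) (1\<^sub>m n) (1\<^sub>m n)"
  unfolding geomean_dominated_def by simp

lemma geomean_dominated_mult:
  fixes A1 A2 :: "'a::real_normed_field mat"
  assumes "A1 \<in> carrier_mat n n" "B1 \<in> carrier_mat n n" "C1 \<in> carrier_mat n n"
    and "A2 \<in> carrier_mat n n" "B2 \<in> carrier_mat n n" "C2 \<in> carrier_mat n n"
    and dom1: "geomean_dominated n A1 B1 C1" and dom2: "geomean_dominated n A2 B2 C2"
  shows "geomean_dominated n (A1 * A2) (B1 * B2) (C1 * C2)"
  unfolding geomean_dominated_def
proof (intro allI impI)
  fix i j assume i: "i < n" and j: "j < n"
  have "norm (A1 $$ (i, l) * A2 $$ (l, j)) \<le>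
          sqrt (B1 $$ (i, l) * B2 $$ (l, j)) * sqrt (C1 $$ (i, l) * C2 $$ (l, j))" if "l < n" for l
  proof -
    have "norm (A1 $$ (i, l) * A2 $$ (l, j)) \<le>
            (sqrt (B1 $$ (i, l)) * sqrt (C1 $$ (i, l))) * (sqrt (B2 $$ (l, j)) * sqrt (C2 $$ (l, j)))"
      using geomean_dominatedD[OF dom1 i that] geomean_dominatedD[OF dom2 that j]
      unfolding norm_mult by (intro mult_mono) auto
    then show ?thesis by (simp add: real_sqrt_mult mult_ac)
  qed
  then have "norm (\<Sum>l<n. A1 $$ (i, l) * A2 $$ (l, j)) \<le>
      sqrt (\<Sum>l<n. B1 $$ (i, l) * B2 $$ (l, j)) * sqrt (\<Sum>l<n. C1 $$ (i, l) * C2 $$ (l, j))"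
    using geomean_dominatedD[OF dom1 i] geomean_dominatedD[OF dom2 _ j]
    by (intro norm_sum_le_sqrt_sum_mult_sqrt_sum) auto
  moreover have "0 \<le> (\<Sum>l<n. B1 $$ (i, l) * B2 $$ (l, j))" "0 \<le> (\<Sum>l<n. C1 $$ (i, l) * C2 $$ (l, j))"
    using geomean_dominatedD[OF dom1 i] geomean_dominatedD[OF dom2 _ j] by (auto intro!: sum_nonneg)
  ultimately show "0 \<le> (B1 * B2) $$ (i, j) \<and> 0 \<le> (C1 * C2) $$ (i, j) \<and>
      norm ((A1 * A2) $$ (i, j)) \<le> sqrt ((B1 * B2) $$ (i, j)) * sqrt ((C1 * C2) $$ (i, j))"
    using assms i j by (simp only: index_mult_mat_square)
qed

lemma geomean_dominated_pow:
  fixes A :: "'a::real_normed_field mat"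
  assumes "A \<in> carrier_mat n n" "B \<in> carrier_mat n n" "C \<in> carrier_mat n n"
    and "geomean_dominated n A B C"
  shows "geomean_dominated n (A ^\<^sub>m k) (B ^\<^sub>m k) (C ^\<^sub>m k)"
proof (induction k)
  case 0
  show ?case using assms geomean_dominated_one by auto
next
  case (Suc k)
  then show ?case using assms by (simp add: geomean_dominated_mult)
qed

lemma inf_norm_le_geomean:
  fixes X :: "'a::real_normed_vector mat"
  assumes "n > 0" "X \<in> carrier_mat n n" "Y \<in> carrier_mat n n" "Z \<in> carrier_mat n n"
    and dom: "geomean_dominated n X Y Z"
  shows "inf_norm X \<le> sqrt (inf_norm Y) * sqrt (inf_norm Z)"
proof -
  have "(\<Sum>j<n. norm (X $$ (i, j))) \<le> sqrt (inf_norm Y) * sqrt (inf_norm Z)" if i: "i < n" for i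
  proof -
    have nonneg: "0 \<le> Y $$ (i, j)" "0 \<le> Z $$ (i, j)" if "j < n" for j
      using geomean_dominatedD[OF dom i that] by auto
    have "norm (\<Sum>j<n. norm (X $$ (i, j))) \<le> sqrt (\<Sum>j<n. Y $$ (i, j)) * sqrt (\<Sum>j<n. Z $$ (i, j))"
      using geomean_dominatedD[OF dom i] by (intro norm_sum_le_sqrt_sum_mult_sqrt_sum) auto
    then have "(\<Sum>j<n. norm (X $$ (i, j))) \<le> sqrt (\<Sum>j<n. Y $$ (i, j)) * sqrt (\<Sum>j<n. Z $$ (i, j))"
      by (simp add: sum_nonneg)
    also have "\<dots> \<le> sqrt (inf_norm Y) * sqrt (inf_norm Z)"
    proof (intro mult_mono real_sqrt_le_mono)
      show "(\<Sum>j<n. Y $$ (i, j)) \<le> inf_norm Y"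
        using row_sum_le_inf_norm[OF assms(3) i] nonneg by simp
      show "(\<Sum>j<n. Z $$ (i, j)) \<le> inf_norm Z"
        using row_sum_le_inf_norm[OF assms(4) i] nonneg by simp
    next
      have "0 \<le> inf_norm Y"
        by (rule order.trans[OF sum_nonneg row_sum_le_inf_norm[OF assms(3) i]]) simp
      then show "0 \<le> sqrt (inf_norm Y)" by simp
    qed (use nonneg in \<open>auto intro: sum_nonneg\<close>)
    finally show ?thesis .
  qed
  then show ?thesis
    unfolding inf_norm_def using assms(1,2) by (intro Max.boundedI) auto
qed

lemma geomean_dominated_series_limit:
  fixes a :: "nat \<Rightarrow> 'a::real_normed_vector"
  assumes "\<And>k. 0 \<le> b k" "\<And>k. 0 \<le> c k" "\<And>k. norm (a k) \<le> sqrt (b k) * sqrt (c k)"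
    and a: "(\<lambda>N. \<Sum>k<N. a k) \<longlonglongrightarrow> x"
    and b: "(\<lambda>N. \<Sum>k<N. b k) \<longlonglongrightarrow> y"
    and c: "(\<lambda>N. \<Sum>k<N. c k) \<longlonglongrightarrow> z"
  shows "0 \<le> y \<and> 0 \<le> z \<and> norm x \<le> sqrt y * sqrt z"
proof (intro conjI)
  show "0 \<le> y" by (rule LIMSEQ_le_const[OF b]) (use assms(1) in \<open>auto intro: sum_nonneg\<close>)
  show "0 \<le> z" by (rule LIMSEQ_le_const[OF c]) (use assms(2) in \<open>auto intro: sum_nonneg\<close>)
  show "norm x \<le> sqrt y * sqrt z"
    using tendsto_norm[OF a] tendsto_mult[OF tendsto_real_sqrt[OF b] tendsto_real_sqrt[OF c]]
    by (rule LIMSEQ_le) (use assms(1-3) in \<open>auto intro!: exI norm_sum_le_sqrt_sum_mult_sqrt_sum\<close>)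
qed

lemma smult_pow_mat:
  fixes M :: "'a::comm_ring_1 mat"
  assumes "M \<in> carrier_mat n n"
  shows "(a \<cdot>\<^sub>m M) ^\<^sub>m k = a ^ k \<cdot>\<^sub>m (M ^\<^sub>m k)"
proof (induction k)
  case 0
  show ?case using assms by (auto intro!: eq_matI)
next
  case (Suc k)
  then show ?case
    using assms by (simp add: mult_smult_assoc_mat mult_smult_distrib[of _ n n]) (auto intro!: eq_matI)
qed

lemma eigenvector_smult_mat:
  assumes "A \<in> carrier_mat n n" "eigenvector A v e"
  shows "eigenvector (a \<cdot>\<^sub>m A) v (a * e)"
proof -
  have v: "v \<in> carrier_vec n" "v \<noteq> 0\<^sub>v n" and Av: "A *\<^sub>v v = e \<cdot>\<^sub>v v"
    using assms unfolding eigenvector_def by auto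
  have "(a \<cdot>\<^sub>m A) *\<^sub>v v = a \<cdot>\<^sub>v (A *\<^sub>v v)"
    using assms(1) v by (intro eq_vecI) auto
  then show ?thesis
    using assms(1) v Av unfolding eigenvector_def by (auto simp: smult_smult_assoc)
qed

lemma spectral_radius_nonneg:
  assumes "M \<in> carrier_mat n n" "n > 0"
  shows "spectral_radius M \<ge> 0"
  using spectral_radius_mem_max(1)[OF assms] by auto

lemma norm_mult_spectral_radius_le:
  assumes M: "M \<in> carrier_mat n n" and n: "n > 0"
  shows "norm a * spectral_radius M \<le> spectral_radius (a \<cdot>\<^sub>m M)"
proof -
  obtain \<mu> where "\<mu> \<in> spectrum M" and \<rho>: "spectral_radius M = norm \<mu>"
    using spectral_radius_mem_max(1)[OF M n] by auto
  then obtain v where "eigenvector M v \<mu>"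
    unfolding spectrum_def eigenvalue_def by auto
  then have "eigenvector (a \<cdot>\<^sub>m M) v (a * \<mu>)"
    by (rule eigenvector_smult_mat[OF M])
  then have "norm (a * \<mu>) \<le> spectral_radius (a \<cdot>\<^sub>m M)"
    using M n by (intro spectral_radius_mem_max(2)[of _ n] imageI) (auto simp: spectrum_def eigenvalue_def)
  then show ?thesis by (simp add: \<rho> norm_mult)
qed

lemma norm_bound_pow_iff:
  assumes "M \<in> carrier_mat n n"
  shows "norm_bound (M ^\<^sub>m k) b \<longleftrightarrow> (\<forall>i<n. \<forall>j<n. norm ((M ^\<^sub>m k) $$ (i, j)) \<le> b)"
proof -
  have "dim_row M = n" "dim_col M = n" using assms by auto
  then show ?thesis unfolding norm_bound_def by auto
qed

lemma norm_bound_pow_entry: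
  assumes "M \<in> carrier_mat n n" "norm_bound (M ^\<^sub>m k) b" "i < n" "j < n"
  shows "norm ((M ^\<^sub>m k) $$ (i, j)) \<le> b"
  using assms(2-4) unfolding norm_bound_pow_iff[OF assms(1)] by blast

lemma spectral_radius_less_imp_power_bound:
  assumes M: "M \<in> carrier_mat n n" and n: "n > 0" and r: "spectral_radius M < r"
  shows "\<exists>c. \<forall>k. norm_bound (M ^\<^sub>m k) (c * r ^ k)"
proof -
  have r0: "r > 0" using spectral_radius_nonneg[OF M n] r by linarith
  define M' where "M' = complex_of_real (1 / r) \<cdot>\<^sub>m M"
  have M': "M' \<in> carrier_mat n n" unfolding M'_def using M by auto
  have M_eq: "M = complex_of_real r \<cdot>\<^sub>m M'"
    unfolding M'_def using M r0 by (intro eq_matI) auto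
  have "r * spectral_radius M' \<le> spectral_radius M"
    using norm_mult_spectral_radius_le[OF M' n, of "complex_of_real r"] r0 M_eq by simp
  with r have "r * spectral_radius M' < r * 1" by simp
  then have "spectral_radius M' < 1" using r0 by (simp only: mult_less_cancel_left_pos)
  then obtain c where c: "\<And>k. norm_bound (M' ^\<^sub>m k) c"
    using spectral_radius_jnf_norm_bound_less_1_upper_triangular[OF M'] by auto
  have "norm_bound (M ^\<^sub>m k) (c * r ^ k)" for k
    unfolding norm_bound_pow_iff[OF M]
  proof (intro allI impI)
    fix i j assume ij: "i < n" "j < n"
    have "norm ((M ^\<^sub>m k) $$ (i, j)) = r ^ k * norm ((M' ^\<^sub>m k) $$ (i, j))"
      unfolding M_eq smult_pow_mat[OF M'] using ij M' r0 by (simp add: norm_mult norm_power)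
    also have "\<dots> \<le> r ^ k * c"
      using norm_bound_pow_entry[OF M' c ij] r0 by (intro mult_left_mono) auto
    finally show "norm ((M ^\<^sub>m k) $$ (i, j)) \<le> c * r ^ k" by (simp add: mult_ac)
  qed
  then show ?thesis by auto
qed

lemma spectral_radius_of_real_less_imp_power_bound:
  fixes B :: "real mat"
  assumes B: "B \<in> carrier_mat n n" and "n > 0"
    and "spectral_radius (map_mat complex_of_real B) < r"
  shows "\<exists>c. \<forall>k. norm_bound (B ^\<^sub>m k) (c * r ^ k)"
proof -
  have "norm_bound (map_mat complex_of_real B ^\<^sub>m k) b = norm_bound (B ^\<^sub>m k) b" for k b
    unfolding norm_bound_def by (simp add: of_real_hom.mat_hom_pow[OF B, symmetric])
  then show ?thesis
    using spectral_radius_less_imp_power_bound[of "map_mat complex_of_real B"] assms by simp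
qed

lemma spectral_radius_le_if_power_bound:
  assumes A: "A \<in> carrier_mat n n" and n: "n > 0" and t: "t > 0"
    and bound: "\<And>k. norm_bound (A ^\<^sub>m k) (c * t ^ k)"
  shows "spectral_radius A \<le> t"
proof (rule ccontr)
  assume "\<not> spectral_radius A \<le> t"
  obtain e where "e \<in> spectrum A" and \<rho>: "spectral_radius A = norm e"
    using spectral_radius_mem_max(1)[OF A n] by auto
  then obtain v where eigvec: "eigenvector A v e"
    unfolding spectrum_def eigenvalue_def by auto
  then have v: "v \<in> carrier_vec n" "v \<noteq> 0\<^sub>v n" using A unfolding eigenvector_def by auto
  then obtain i where i: "i < n" "v $ i \<noteq> 0" by (metis eq_vecI carrier_vecD index_zero_vec)
  define V where "V = (\<Sum>j<n. norm (v $ j))"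
  have bounded: "(norm e / t) ^ k \<le> c * V / norm (v $ i)" for k
  proof -
    have "e ^ k * v $ i = (\<Sum>j<n. (A ^\<^sub>m k) $$ (i, j) * v $ j)"
      using arg_cong[OF eigenvector_pow[OF A eigvec, of k], of "\<lambda>w. w $ i"] i v A
      by (simp add: scalar_prod_def lessThan_atLeast0)
    then have "norm e ^ k * norm (v $ i) = norm (\<Sum>j<n. (A ^\<^sub>m k) $$ (i, j) * v $ j)"
      by (metis norm_mult norm_power)
    also have "\<dots> \<le> (\<Sum>j<n. norm ((A ^\<^sub>m k) $$ (i, j)) * norm (v $ j))"
      by (rule order.trans[OF norm_sum]) (simp add: norm_mult)
    also have "\<dots> \<le> (\<Sum>j<n. c * t ^ k * norm (v $ j))"
      using norm_bound_pow_entry[OF A bound i(1)] by (intro sum_mono mult_right_mono) auto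
    also have "\<dots> = t ^ k * (c * V)" by (simp add: V_def sum_distrib_left mult_ac)
    finally show ?thesis using t i(2) by (simp add: power_divide field_simps)
  qed
  have "1 < norm e / t" using \<open>\<not> spectral_radius A \<le> t\<close> \<rho> t by simp
  then obtain k where "c * V / norm (v $ i) < (norm e / t) ^ k" using real_arch_pow by blast
  with bounded[of k] show False by linarith
qed

lemma spectral_radius_le_geomean:
  fixes A :: "complex mat" and B C :: "real mat"
  assumes n: "n > 0" and A: "A \<in> carrier_mat n n" and B: "B \<in> carrier_mat n n"
    and C: "C \<in> carrier_mat n n" and dom: "geomean_dominated n A B C"
  shows "spectral_radius A \<le>
           sqrt (spectral_radius (map_mat complex_of_real B)) *
           sqrt (spectral_radius (map_mat complex_of_real C))"
proof -
  let ?\<rho>B = "spectral_radius (map_mat complex_of_real B)"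
  let ?\<rho>C = "spectral_radius (map_mat complex_of_real C)"
  have \<rho>B: "?\<rho>B \<ge> 0" and \<rho>C: "?\<rho>C \<ge> 0"
    using B C n by (auto intro: spectral_radius_nonneg)
  have shifted: "spectral_radius A \<le> sqrt (?\<rho>B + d) * sqrt (?\<rho>C + d)" if d: "d > 0" for d
  proof -
    obtain cB where cB: "\<And>k. norm_bound (B ^\<^sub>m k) (cB * (?\<rho>B + d) ^ k)"
      using spectral_radius_of_real_less_imp_power_bound[OF B n, of "?\<rho>B + d"] d by auto
    obtain cC where cC: "\<And>k. norm_bound (C ^\<^sub>m k) (cC * (?\<rho>C + d) ^ k)"
      using spectral_radius_of_real_less_imp_power_bound[OF C n, of "?\<rho>C + d"] d by auto
    have "norm_bound (A ^\<^sub>m k) (sqrt (cB * cC) * (sqrt (?\<rho>B + d) * sqrt (?\<rho>C + d)) ^ k)" for k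
      unfolding norm_bound_pow_iff[OF A]
    proof (intro allI impI)
      fix i j assume ij: "i < n" "j < n"
      have dom_k: "0 \<le> (B ^\<^sub>m k) $$ (i, j)" "0 \<le> (C ^\<^sub>m k) $$ (i, j)"
        "norm ((A ^\<^sub>m k) $$ (i, j)) \<le> sqrt ((B ^\<^sub>m k) $$ (i, j)) * sqrt ((C ^\<^sub>m k) $$ (i, j))"
        using geomean_dominatedD[OF geomean_dominated_pow[OF A B C dom] ij] by auto
      have "(B ^\<^sub>m k) $$ (i, j) \<le> cB * (?\<rho>B + d) ^ k" "(C ^\<^sub>m k) $$ (i, j) \<le> cC * (?\<rho>C + d) ^ k"
        using norm_bound_pow_entry[OF B cB ij] norm_bound_pow_entry[OF C cC ij] by (auto simp: abs_le_iff)
      with dom_k have "sqrt ((B ^\<^sub>m k) $$ (i, j)) * sqrt ((C ^\<^sub>m k) $$ (i, j)) \<le>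
                   sqrt (cB * (?\<rho>B + d) ^ k) * sqrt (cC * (?\<rho>C + d) ^ k)"
        by (intro mult_mono real_sqrt_le_mono) auto
      with dom_k(3) have "norm ((A ^\<^sub>m k) $$ (i, j)) \<le> sqrt (cB * (?\<rho>B + d) ^ k) * sqrt (cC * (?\<rho>C + d) ^ k)"
        by linarith
      then show "norm ((A ^\<^sub>m k) $$ (i, j)) \<le> sqrt (cB * cC) * (sqrt (?\<rho>B + d) * sqrt (?\<rho>C + d)) ^ k"
        by (simp add: real_sqrt_mult real_sqrt_power power_mult_distrib mult_ac)
    qed
    then show ?thesis
      using \<rho>B \<rho>C d by (intro spectral_radius_le_if_power_bound[OF A n]) auto
  qed
  have "((\<lambda>d. sqrt (?\<rho>B + d) * sqrt (?\<rho>C + d)) \<longlongrightarrow> sqrt ?\<rho>B * sqrt ?\<rho>C) (at_right 0)"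
    by (auto intro!: tendsto_eq_intros)
  moreover have "\<forall>\<^sub>F d in at_right 0. spectral_radius A \<le> sqrt (?\<rho>B + d) * sqrt (?\<rho>C + d)"
    using eventually_at_right_less[of 0] by (rule eventually_mono) (rule shifted)
  ultimately show ?thesis by (rule tendsto_lowerbound) simp
qed

lemma det_one_minus_nonzero:
  assumes M: "M \<in> carrier_mat n n" and \<rho>: "spectral_radius M < 1"
  shows "Determinant.det (1\<^sub>m n - M) \<noteq> 0"
proof
  assume "Determinant.det (1\<^sub>m n - M) = 0"
  moreover have "char_matrix M 1 = - (1\<^sub>m n - M)"
    using M unfolding char_matrix_def by (intro eq_matI) auto
  moreover have "1\<^sub>m n - M \<in> carrier_mat n n" using M by (rule minus_carrier_mat)
  ultimately have ev: "eigenvalue M 1"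
    using M by (simp add: eigenvalue_det det_0_negate)
  then have "norm (1::complex) \<in> norm ` spectrum M" unfolding spectrum_def by blast
  then have "norm (1::complex) \<le> spectral_radius M"
    using spectral_radius_mem_max(2)[OF M eigenvalue_imp_nonzero_dim[OF M ev]] by blast
  with \<rho> show False by simp
qed

lemma det_one_minus_of_real_nonzero:
  fixes B :: "real mat"
  assumes B: "B \<in> carrier_mat n n" and "spectral_radius (map_mat complex_of_real B) < 1"
  shows "Determinant.det (1\<^sub>m n - B) \<noteq> 0"
proof -
  have "map_mat complex_of_real (1\<^sub>m n - B) = 1\<^sub>m n - map_mat complex_of_real B"
    using B by (intro eq_matI) auto
  then have "complex_of_real (Determinant.det (1\<^sub>m n - B)) =
               Determinant.det (1\<^sub>m n - map_mat complex_of_real B)"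
    by (metis of_real_hom.hom_det)
  then show ?thesis using det_one_minus_nonzero[of "map_mat complex_of_real B" n] assms by auto
qed

lemma inv_mat_if_det_nonzero:
  fixes M :: "'a::field mat"
  assumes M: "M \<in> carrier_mat n n" and "Determinant.det M \<noteq> 0"
  shows "inv_mat M \<in> carrier_mat n n" "M * inv_mat M = 1\<^sub>m n" "inv_mat M * M = 1\<^sub>m n"
    and "invertible_mat M"
proof -
  obtain X where X: "X \<in> carrier_mat n n" "M * X = 1\<^sub>m n" "X * M = 1\<^sub>m n"
    using det_non_zero_imp_unit[OF assms, of "()"] unfolding Units_def ring_mat_def by auto
  have "inv_mat M = X"
    unfolding inv_mat_def
  proof (rule the_equality)
    fix Y assume "Y \<in> carrier_mat (dim_row M) (dim_row M) \<and>
                  M * Y = 1\<^sub>m (dim_row M) \<and> Y * M = 1\<^sub>m (dim_row M)"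
    then have Y: "Y \<in> carrier_mat n n" "Y * M = 1\<^sub>m n" using M by auto
    have "Y = Y * (M * X)" using Y X by simp
    also have "\<dots> = (Y * M) * X" by (rule assoc_mult_mat[OF Y(1) M X(1), symmetric])
    also have "\<dots> = X" using X Y by simp
    finally show "Y = X" .
  qed (use M X in auto)
  then show "inv_mat M \<in> carrier_mat n n" "M * inv_mat M = 1\<^sub>m n" "inv_mat M * M = 1\<^sub>m n"
    using X by auto
  show "invertible_mat M"
    unfolding invertible_mat_def inverts_mat_def using M X by auto
qed

lemma inv_mat_one_minus:
  fixes M :: "complex mat"
  assumes "M \<in> carrier_mat n n" "spectral_radius M < 1"
  shows "inv_mat (1\<^sub>m n - M) \<in> carrier_mat n n" "(1\<^sub>m n - M) * inv_mat (1\<^sub>m n - M) = 1\<^sub>m n"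
    and "invertible_mat (1\<^sub>m n - M)"
  using inv_mat_if_det_nonzero[OF minus_carrier_mat[OF assms(1)] det_one_minus_nonzero[OF assms]]
  by auto

lemma inv_mat_one_minus_of_real:
  fixes M :: "real mat"
  assumes "M \<in> carrier_mat n n" "spectral_radius (map_mat complex_of_real M) < 1"
  shows "inv_mat (1\<^sub>m n - M) \<in> carrier_mat n n" "(1\<^sub>m n - M) * inv_mat (1\<^sub>m n - M) = 1\<^sub>m n"
    and "invertible_mat (1\<^sub>m n - M)"
  using inv_mat_if_det_nonzero[OF minus_carrier_mat[OF assms(1)] det_one_minus_of_real_nonzero[OF assms]]
  by auto

text \<open>With X = (I - M)\<inverse>, the remainder of the Neumann series is X - (\<Sum>k<N. M^k) = M^N * X.\<close>

lemma neumann_series_tendsto: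
  fixes M X :: "'a::real_normed_field mat"
  assumes M: "M \<in> carrier_mat n n" and X: "X \<in> carrier_mat n n"
    and inv: "(1\<^sub>m n - M) * X = 1\<^sub>m n"
    and bound: "\<And>k. norm_bound (M ^\<^sub>m k) (c * r ^ k)" and r: "0 \<le> r" "r < 1"
    and i: "i < n" and j: "j < n"
  shows "(\<lambda>N. \<Sum>k<N. (M ^\<^sub>m k) $$ (i, j)) \<longlonglongrightarrow> X $$ (i, j)"
proof -
  have "(1\<^sub>m n - M) * X = 1\<^sub>m n * X - M * X"
    by (rule minus_mult_distrib_mat[OF one_carrier_mat M X])
  then have "X - M * X = 1\<^sub>m n"
    using inv left_mult_one_mat[OF X] by simp
  moreover have "M * X = X - (X - M * X)"
    using M X by (intro eq_matI) auto
  ultimately have MX: "M * X = X - 1\<^sub>m n" by simp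
  have step: "M ^\<^sub>m Suc N * X = M ^\<^sub>m N * X - M ^\<^sub>m N" for N
  proof -
    have "M ^\<^sub>m Suc N * X = M ^\<^sub>m N * (M * X)"
      using M X by (simp add: assoc_mult_mat[of _ n n _ n _ n])
    also have "\<dots> = M ^\<^sub>m N * X - M ^\<^sub>m N"
      unfolding MX using M X by (simp add: mult_minus_distrib_mat[of _ n n])
    finally show ?thesis .
  qed
  have remainder: "X $$ (i, j) - (\<Sum>k<N. (M ^\<^sub>m k) $$ (i, j)) = (M ^\<^sub>m N * X) $$ (i, j)" for N
  proof (induction N)
    case 0
    show ?case using i j M X by simp
  next
    case (Suc N)
    have "(M ^\<^sub>m Suc N * X) $$ (i, j) = (M ^\<^sub>m N * X) $$ (i, j) - (M ^\<^sub>m N) $$ (i, j)"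
      unfolding step using i j M X by simp
    with Suc show ?case by simp
  qed
  define K where "K = (\<Sum>l<n. norm (X $$ (l, j)))"
  have decay: "norm ((M ^\<^sub>m N * X) $$ (i, j)) \<le> c * K * r ^ N" for N
  proof -
    have "norm ((M ^\<^sub>m N * X) $$ (i, j)) = norm (\<Sum>l<n. (M ^\<^sub>m N) $$ (i, l) * X $$ (l, j))"
      using M X i j by (simp only: index_mult_mat_square[of _ n] pow_carrier_mat)
    also have "\<dots> \<le> (\<Sum>l<n. norm ((M ^\<^sub>m N) $$ (i, l)) * norm (X $$ (l, j)))"
      by (rule order.trans[OF norm_sum]) (simp add: norm_mult)
    also have "\<dots> \<le> (\<Sum>l<n. c * r ^ N * norm (X $$ (l, j)))"
      using norm_bound_pow_entry[OF M bound i] by (intro sum_mono mult_right_mono) auto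
    also have "\<dots> = c * K * r ^ N" by (simp add: K_def sum_distrib_left mult_ac)
    finally show ?thesis .
  qed
  have "(\<lambda>N. c * K * r ^ N) \<longlonglongrightarrow> 0"
    using r by (intro tendsto_mult_right_zero LIMSEQ_power_zero) auto
  moreover have "\<forall>\<^sub>F N in sequentially. norm ((M ^\<^sub>m N * X) $$ (i, j)) \<le> norm (c * K * r ^ N) * 1"
    using decay by (intro always_eventually allI) (metis abs_ge_self mult_1_right order_trans real_norm_def)
  ultimately have "(\<lambda>N. (M ^\<^sub>m N * X) $$ (i, j)) \<longlonglongrightarrow> 0"
    by (rule tendsto_0_le)
  then have "(\<lambda>N. X $$ (i, j) - (M ^\<^sub>m N * X) $$ (i, j)) \<longlonglongrightarrow> X $$ (i, j)"
    using tendsto_diff[OF tendsto_const] by fastforce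
  then show ?thesis by (simp flip: remainder)
qed

lemma geomean_dominated_inverse_one_minus:
  fixes A :: "complex mat" and B C :: "real mat"
  assumes n: "n > 0" and A: "A \<in> carrier_mat n n" and B: "B \<in> carrier_mat n n"
    and C: "C \<in> carrier_mat n n" and dom: "geomean_dominated n A B C"
    and \<rho>A: "spectral_radius A < 1"
    and \<rho>B: "spectral_radius (map_mat complex_of_real B) < 1"
    and \<rho>C: "spectral_radius (map_mat complex_of_real C) < 1"
  shows "geomean_dominated n (inv_mat (1\<^sub>m n - A)) (inv_mat (1\<^sub>m n - B)) (inv_mat (1\<^sub>m n - C))"
proof -
  let ?rA = "(spectral_radius A + 1) / 2"
  let ?rB = "(spectral_radius (map_mat complex_of_real B) + 1) / 2"
  let ?rC = "(spectral_radius (map_mat complex_of_real C) + 1) / 2"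
  have rA: "0 \<le> ?rA" "?rA < 1" using \<rho>A spectral_radius_nonneg[OF A n] by auto
  have rB: "0 \<le> ?rB" "?rB < 1" using \<rho>B spectral_radius_nonneg[of _ n] B n by auto
  have rC: "0 \<le> ?rC" "?rC < 1" using \<rho>C spectral_radius_nonneg[of _ n] C n by auto
  obtain cA where cA: "\<And>k. norm_bound (A ^\<^sub>m k) (cA * ?rA ^ k)"
    using spectral_radius_less_imp_power_bound[OF A n, of ?rA] \<rho>A by auto
  obtain cB where cB: "\<And>k. norm_bound (B ^\<^sub>m k) (cB * ?rB ^ k)"
    using spectral_radius_of_real_less_imp_power_bound[OF B n, of ?rB] \<rho>B by auto
  obtain cC where cC: "\<And>k. norm_bound (C ^\<^sub>m k) (cC * ?rC ^ k)"
    using spectral_radius_of_real_less_imp_power_bound[OF C n, of ?rC] \<rho>C by auto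
  note invA = inv_mat_one_minus[OF A \<rho>A]
  note invB = inv_mat_one_minus_of_real[OF B \<rho>B]
  note invC = inv_mat_one_minus_of_real[OF C \<rho>C]
  show ?thesis
    unfolding geomean_dominated_def
  proof (intro allI impI)
    fix i j assume i: "i < n" and j: "j < n"
    show "0 \<le> inv_mat (1\<^sub>m n - B) $$ (i, j) \<and> 0 \<le> inv_mat (1\<^sub>m n - C) $$ (i, j) \<and>
        norm (inv_mat (1\<^sub>m n - A) $$ (i, j)) \<le>
          sqrt (inv_mat (1\<^sub>m n - B) $$ (i, j)) * sqrt (inv_mat (1\<^sub>m n - C) $$ (i, j))"
    proof (rule geomean_dominated_series_limit)
      show "(\<lambda>N. \<Sum>k<N. (A ^\<^sub>m k) $$ (i, j)) \<longlonglongrightarrow> inv_mat (1\<^sub>m n - A) $$ (i, j)"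
        using invA by (intro neumann_series_tendsto[OF A _ _ cA rA i j])
      show "(\<lambda>N. \<Sum>k<N. (B ^\<^sub>m k) $$ (i, j)) \<longlonglongrightarrow> inv_mat (1\<^sub>m n - B) $$ (i, j)"
        using invB by (intro neumann_series_tendsto[OF B _ _ cB rB i j])
      show "(\<lambda>N. \<Sum>k<N. (C ^\<^sub>m k) $$ (i, j)) \<longlonglongrightarrow> inv_mat (1\<^sub>m n - C) $$ (i, j)"
        using invC by (intro neumann_series_tendsto[OF C _ _ cC rC i j])
    qed (use geomean_dominatedD[OF geomean_dominated_pow[OF A B C dom] i j] in auto)
  qed
qed

theorem lemma8:
  fixes A :: "complex mat" and B C :: "real mat" and n :: nat
  assumes "n > 0"
    and "A \<in> carrier_mat n n" and "B \<in> carrier_mat n n" and "C \<in> carrier_mat n n"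
    and "\<And>i j. i < n \<Longrightarrow> j < n \<Longrightarrow> B $$ (i, j) \<ge> 0"
    and "\<And>i j. i < n \<Longrightarrow> j < n \<Longrightarrow> C $$ (i, j) \<ge> 0"
    and "\<And>i j. i < n \<Longrightarrow> j < n \<Longrightarrow>
           norm (A $$ (i, j)) \<le> sqrt (B $$ (i, j)) * sqrt (C $$ (i, j))"
  shows "spectral_radius A \<le>
           sqrt (spectral_radius (map_mat complex_of_real B)) *
           sqrt (spectral_radius (map_mat complex_of_real C)) \<and>
         (max (spectral_radius (map_mat complex_of_real B))
             (spectral_radius (map_mat complex_of_real C)) < 1 \<longrightarrow>
           spectral_radius A < 1 \<and>
           invertible_mat (1\<^sub>m n - A) \<and> invertible_mat (1\<^sub>m n - B) \<and>
           invertible_mat (1\<^sub>m n - C) \<and>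
           inf_norm (inv_mat (1\<^sub>m n - A)) \<le>
             sqrt (inf_norm (inv_mat (1\<^sub>m n - B))) * sqrt (inf_norm (inv_mat (1\<^sub>m n - C))))"
proof -
  note n = assms(1) and A = assms(2) and B = assms(3) and C = assms(4)
  let ?\<rho>B = "spectral_radius (map_mat complex_of_real B)"
  let ?\<rho>C = "spectral_radius (map_mat complex_of_real C)"
  have dom: "geomean_dominated n A B C"
    using assms(5-7) unfolding geomean_dominated_def by auto
  have \<rho>A: "spectral_radius A \<le> sqrt ?\<rho>B * sqrt ?\<rho>C"
    by (rule spectral_radius_le_geomean[OF n A B C dom])
  moreover have "spectral_radius A < 1 \<and>
           invertible_mat (1\<^sub>m n - A) \<and> invertible_mat (1\<^sub>m n - B) \<and>
           invertible_mat (1\<^sub>m n - C) \<and>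
           inf_norm (inv_mat (1\<^sub>m n - A)) \<le>
             sqrt (inf_norm (inv_mat (1\<^sub>m n - B))) * sqrt (inf_norm (inv_mat (1\<^sub>m n - C)))"
    if "max ?\<rho>B ?\<rho>C < 1"
  proof -
    have \<rho>B: "?\<rho>B < 1" and \<rho>C: "?\<rho>C < 1" using that by auto
    moreover have "0 \<le> ?\<rho>B" "0 \<le> ?\<rho>C" using B C n by (auto intro: spectral_radius_nonneg)
    ultimately have "sqrt ?\<rho>B * sqrt ?\<rho>C \<le> sqrt ?\<rho>B" "sqrt ?\<rho>B < 1"
      by (auto intro: mult_left_le)
    then have "sqrt ?\<rho>B * sqrt ?\<rho>C < 1" by linarith
    with \<rho>A have \<rho>A1: "spectral_radius A < 1" by linarith
    have "geomean_dominated n (inv_mat (1\<^sub>m n - A)) (inv_mat (1\<^sub>m n - B)) (inv_mat (1\<^sub>m n - C))"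
      by (rule geomean_dominated_inverse_one_minus[OF n A B C dom \<rho>A1 \<rho>B \<rho>C])
    from inf_norm_le_geomean[OF n inv_mat_one_minus(1)[OF A \<rho>A1] inv_mat_one_minus_of_real(1)[OF B \<rho>B]
        inv_mat_one_minus_of_real(1)[OF C \<rho>C] this]
    show ?thesis
      using \<rho>A1 inv_mat_one_minus(3)[OF A \<rho>A1] inv_mat_one_minus_of_real(3)[OF B \<rho>B]
        inv_mat_one_minus_of_real(3)[OF C \<rho>C] by blast
  qed
  ultimately show ?thesis by blast
qed

end
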